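(* Let $\Gamma$ and the data $s_0,\eta_0,\Xi$ be as in the context. There exists $t_0>0$ such that for every $\mathbf x\in\mathbb R^{n-1}$ and every $t>t_0$: if $u(\mathbf x)\sigma a(t)=\gamma\xi na(s)k$ with $\gamma\in\Gamma$, $\xi\in\Xi$, $n\in N$, $s>s_0$ and $k\in K$, then $\gamma\xi\notin P$.
   Context: $n\ge2$, $G=\mathrm{SO}(n,1)$, $K\cong\mathrm{SO}(n)$ maximal compact. $A=\{a(t)\}$ a one-parameter $\mathbb R$-split torus with $\mathfrak g=\mathfrak g_{-1}\oplus\mathfrak z(A)\oplus\mathfrak g_{+1}$, $\mathrm{Ad}(a(t))=e^{\pm t}$ on $\mathfrak g_{\pm1}$; $M=Z_G(A)\cap K$, $N=\exp\mathfrak g_{+1}$, $\mathfrak g_{+1}\cong\mathbb R^{n-1}$, $u(\mathbf x)=\exp\mathbf x$; $\sigma\in K$ with $\sigma^2=e$, $\sigma a(t)\sigma^{-1}=a(-t)$; $P=MAN$. For compact $\eta\subset N$: $A_s=\{a(t):t\ge s\}$, $\Omega(\eta,s)=\eta A_sK$. $\Gamma\subset G$ discrete, $\Gamma\backslash G$ of finite volume, $\Gamma\backslash\mathbb H^n$ non-compact, with fixed $s_0>0$, compact $\eta_0\subset N$, finite $\Xi\subset G$, $e\in\Xi$, satisfying: (i) $G=\Gamma\Xi\Omega(\eta_0,s_0)$; (ii) $\Gamma\cap\xi N\xi^{-1}$ is a cocompact lattice in $\xi N\xi^{-1}$; (iii) for compact $\eta\subset N$, $\{\gamma:\gamma\Xi\Omega(\eta,s_0)\cap\Omega(\eta,s_0)\neq\emptyset\}$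 is finite; (iv) for each compact $\eta\supseteq\eta_0$ there is $s_1>s_0$ with: $\gamma\xi_1\Omega(\eta,s_0)\cap\xi_2\Omega(\eta,s_1)\neq\emptyset$ implies $\xi_1=\xi_2$, $\gamma\in\xi_1NM\xi_1^{-1}$. *)

theory Defs
  imports "HOL-Analysis.Analysis"
begin

text \<open>Concrete model of G = SO(n,1) (identity component) acting on R^(n+1) with
coordinates indexed by 'm option option: None is the time coordinate e_0,
Some None is e_1, Some (Some i) are the remaining n-1 coordinates, so that
R^(n-1) = real^'m and n = CARD('m) + 1 >= 2.\<close>

type_synonym 'm lmat = "real^'m option option^'m option option"

definition Jform :: "('m::finite) lmat" where
  "Jform = (\<chi> i j. if i = j then (if i = None then -1 else 1) else 0)"

definition Gset :: "('m::finite) lmat set" where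
  "Gset = {g. transpose g ** Jform ** g = Jform \<and> det g = 1 \<and> g $ None $ None > 0}"

definition Kset :: "('m::finite) lmat set" where
  "Kset = {g \<in> Gset. g *v axis None 1 = axis None 1}"

definition aa :: "real \<Rightarrow> ('m::finite) lmat" where
  "aa t = (\<chi> i j.
     if (i = None \<and> j = None) \<or> (i = Some None \<and> j = Some None) then cosh t
     else if (i = None \<and> j = Some None) \<or> (i = Some None \<and> j = None) then sinh t
     else if i = j then 1 else 0)"

text \<open>u(x) = exp X(x), X(x) in g_{+1}; explicitly I + X + X^2/2 (X^3 = 0).\<close>
definition uu :: "real^('m::finite) \<Rightarrow> 'm lmat" where
  "uu x = (let q = (x \<bullet> x) / 2 in (\<chi> i j. case (i, j) of
       (None, None) \<Rightarrow> 1 + q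
     | (None, Some None) \<Rightarrow> - q
     | (None, Some (Some b)) \<Rightarrow> x $ b
     | (Some None, None) \<Rightarrow> q
     | (Some None, Some None) \<Rightarrow> 1 - q
     | (Some None, Some (Some b)) \<Rightarrow> x $ b
     | (Some (Some a), None) \<Rightarrow> x $ a
     | (Some (Some a), Some None) \<Rightarrow> - (x $ a)
     | (Some (Some a), Some (Some b)) \<Rightarrow> (if a = b then 1 else 0)))"

definition Nset :: "('m::finite) lmat set" where
  "Nset = range uu"

definition Mset :: "('m::finite) lmat set" where
  "Mset = {m \<in> Kset. \<forall>t. m ** aa t = aa t ** m}"

definition Pset :: "('m::finite) lmat set" where
  "Pset = {m ** aa t ** v | m t v. m \<in> Mset \<and> v \<in> Nset}"

definition setmul :: "('m::finite) lmat set \<Rightarrow> 'm lmat set \<Rightarrow> 'm lmat set" where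
  "setmul A B = {x ** y | x y. x \<in> A \<and> y \<in> B}"

definition conjset :: "('m::finite) lmat \<Rightarrow> 'm lmat set \<Rightarrow> 'm lmat set" where
  "conjset g S = {g ** x ** matrix_inv g | x. x \<in> S}"

definition Omega :: "('m::finite) lmat set \<Rightarrow> real \<Rightarrow> 'm lmat set" where
  "Omega eta s = {v ** aa t ** k | v t k. v \<in> eta \<and> t \<ge> s \<and> k \<in> Kset}"

definition discrete_set :: "('m::finite) lmat set \<Rightarrow> bool" where
  "discrete_set S \<longleftrightarrow> (\<forall>g\<in>S. \<exists>e>0. \<forall>h\<in>S. dist h g < e \<longrightarrow> h = g)"

definition is_subgroup :: "('m::finite) lmat set \<Rightarrow> 'm lmat set \<Rightarrow> bool" where
  "is_subgroup H S \<longleftrightarrow> H \<subseteq> S \<and> mat 1 \<in> H \<and>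
     (\<forall>x\<in>H. \<forall>y\<in>H. x ** y \<in> H) \<and> (\<forall>x\<in>H. matrix_inv x \<in> H)"

definition cocompact_lattice :: "('m::finite) lmat set \<Rightarrow> 'm lmat set \<Rightarrow> bool" where
  "cocompact_lattice L H \<longleftrightarrow> is_subgroup L H \<and> discrete_set L \<and>
     (\<exists>C. compact C \<and> C \<subseteq> H \<and> H = setmul L C)"

end

theory Submission
  imports Defs
begin

text \<open>The covector \<open>\<nu> = e\<^sub>0 - e\<^sub>1\<close> (\<open>nullrow\<close>), isotropic for the Lorentz form, is a
common left eigenvector of \<open>P\<close>: \<open>\<nu> m a(r) u(y) = e\<^sup>-\<^sup>r \<nu>\<close>, and every element of \<open>K\<close> fixes
\<open>e\<^sub>0\<close>. Reading off the \<open>e\<^sub>0\<close>-entry of \<open>\<nu>\<close> applied to \<open>u(x) \<sigma> a(t) = \<gamma> \<xi> v a(s) k\<close>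
gives \<open>e\<^sup>t = e\<^sup>-\<^sup>r e\<^sup>-\<^sup>s\<close> when \<open>\<gamma>\<xi> = m a(r) u(y) \<in> P\<close>, so it suffices to bound the eigenvalue
\<open>e\<^sup>-\<^sup>r\<close> (\<open>Pchar\<close>) over all \<open>\<gamma> \<in> \<Gamma>\<close> with \<open>\<gamma>\<xi> \<in> P\<close>.

Given two such elements \<open>\<gamma>\<^sub>1\<xi>\<close> and \<open>\<gamma>\<xi>\<close>, translating them on the left by \<open>\<Gamma> \<inter> N\<close>
into a compact fundamental set \<open>C\<close> of \<open>N\<close> (condition (ii) for \<open>\<xi> = 1\<close>) and on the right
by \<open>a(s)\<close> deep into the cusp puts both into the Siegel set \<open>\<Omega>(C, s\<^sub>0)\<close>. The element of
\<open>\<Gamma>\<close> carrying one translate to the other lies in the finite set of condition (iii),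
and the ratio of the eigenvalues of \<open>\<gamma>\<xi>\<close> and \<open>\<gamma>\<^sub>1\<xi>\<close> is its own eigenvalue.\<close>

lemma matrix_inv_left: "invertible A \<Longrightarrow> matrix_inv A ** A = mat 1"
  and matrix_inv_right: "invertible A \<Longrightarrow> A ** matrix_inv A = mat 1"
  unfolding invertible_def matrix_inv_def by (metis (mono_tags, lifting) someI_ex)+

lemma matrix_inv_cancel: "invertible A \<Longrightarrow> X ** matrix_inv A ** (A ** Y) = X ** Y"
  by (metis matrix_inv_left matrix_mul_assoc matrix_mul_rid)

lemma matrix_inv_mat_1: "matrix_inv (mat 1 :: 'a::comm_ring_1^'n^'n) = mat 1"
  using matrix_inv_right[of "mat 1 :: 'a^'n^'n"] by (simp add: invertible_def)

lemma conjset_mat_1: "conjset (mat 1) S = S"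
  by (simp add: conjset_def matrix_inv_mat_1)

lemma Gset_invertible: "g \<in> Gset \<Longrightarrow> invertible g"
  by (simp add: Gset_def invertible_det_nz)

lemma left_eigenvector_of_mult_eq:
  fixes w :: "real^'n"
  assumes Q: "invertible Q" and gQ: "g ** Q = Q'" and a: "a \<noteq> 0"
    and wQ: "w v* Q = a *\<^sub>R w" and wQ': "w v* Q' = b *\<^sub>R w"
  shows "w v* g = (b / a) *\<^sub>R w"
proof -
  have "w v* matrix_inv Q = (1 / a) *\<^sub>R ((w v* Q) v* matrix_inv Q)"
    by (simp add: wQ scaleR_vector_matrix_assoc a)
  also have "\<dots> = (1 / a) *\<^sub>R w"
    by (simp add: vector_matrix_mul_assoc matrix_inv_right[OF Q])
  finally have w_inv: "w v* matrix_inv Q = (1 / a) *\<^sub>R w" .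
  have "w v* g = (w v* Q') v* matrix_inv Q"
    by (simp add: gQ[symmetric] vector_matrix_mul_assoc matrix_mul_assoc[symmetric]
        matrix_inv_right[OF Q])
  also have "\<dots> = (b / a) *\<^sub>R w"
    by (simp add: wQ' scaleR_vector_matrix_assoc w_inv)
  finally show ?thesis .
qed

lemma UNIV_option_option:
  "(UNIV :: 'a option option set) = insert None (insert (Some None) (range (\<lambda>b. Some (Some b))))"
proof -
  have "x \<in> insert None (insert (Some None) (range (\<lambda>b. Some (Some b))))" for x :: "'a option option"
  proof (cases x)
    case (Some y)
    then show ?thesis by (cases y) auto
  qed simp
  then show ?thesis by blast
qed

lemma sum_option_option:
  "sum f (UNIV :: ('a::finite) option option set) =
     f None + f (Some None) + (\<Sum>b\<in>UNIV. f (Some (Some b)))"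
  by (subst UNIV_option_option) (simp add: sum.reindex inj_on_def image_iff add.assoc)

lemma option_option_cases:
  obtains "i = None" | "i = Some None" | a where "i = Some (Some a)"
proof (cases i)
  case (Some y)
  then show ?thesis using that by (cases y) auto
qed (use that in auto)

lemma matrix_mult_entry: "(A ** B) $ i $ j = (\<Sum>k\<in>UNIV. A $ i $ k * B $ k $ j)"
  by (simp add: matrix_matrix_mult_def)

lemma transpose_entry [simp]: "transpose A $ i $ j = A $ j $ i"
  by (simp add: transpose_def)

lemma if_one_zero_mult [simp]:
  "(if P then 1 else 0) * (y::real) = (if P then y else 0)"
  "y * (if P then 1 else 0) = (if P then y else 0)"
  by simp_all

lemma Jform_entry [simp]:
  "(Jform :: ('m::finite) lmat) $ i $ j = (if i = j then (if i = None then -1 else 1) else 0)"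
  by (simp add: Jform_def)

lemma aa_entries [simp]:
  "aa t $ None $ None = cosh t" "aa t $ None $ Some None = sinh t"
  "aa t $ None $ Some (Some b) = 0"
  "aa t $ Some None $ None = sinh t" "aa t $ Some None $ Some None = cosh t"
  "aa t $ Some None $ Some (Some b) = 0"
  "aa t $ Some (Some a) $ None = 0" "aa t $ Some (Some a) $ Some None = 0"
  "aa t $ Some (Some a) $ Some (Some b) = (if a = b then 1 else 0)"
  by (simp_all add: aa_def)

lemma uu_entries [simp]:
  "uu x $ None $ None = 1 + (x \<bullet> x) / 2" "uu x $ None $ Some None = - ((x \<bullet> x) / 2)"
  "uu x $ None $ Some (Some b) = x $ b"
  "uu x $ Some None $ None = (x \<bullet> x) / 2" "uu x $ Some None $ Some None = 1 - (x \<bullet> x) / 2"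
  "uu x $ Some None $ Some (Some b) = x $ b"
  "uu x $ Some (Some a) $ None = x $ a" "uu x $ Some (Some a) $ Some None = - (x $ a)"
  "uu x $ Some (Some a) $ Some (Some b) = (if a = b then 1 else 0)"
  by (simp_all add: uu_def Let_def)

lemma aa_add: "aa r ** aa s = (aa (r + s) :: ('m::finite) lmat)"
proof -
  have "(aa r ** aa s) $ i $ j = (aa (r + s) :: 'm lmat) $ i $ j" for i j
    by (cases i rule: option_option_cases; cases j rule: option_option_cases)
       (simp_all add: matrix_mult_entry sum_option_option cosh_add sinh_add algebra_simps)
  then show ?thesis by (simp add: vec_eq_iff)
qed

lemma aa_mult_uu: "aa t ** uu x = uu (exp t *\<^sub>R x) ** (aa t :: ('m::finite) lmat)"
proof -
  have "(aa t ** uu x) $ i $ j = (uu (exp t *\<^sub>R x) ** (aa t :: 'm lmat)) $ i $ j" for i j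
    by (cases i rule: option_option_cases; cases j rule: option_option_cases)
       (simp_all add: matrix_mult_entry sum_option_option cosh_def sinh_def algebra_simps
         exp_minus_inverse)
  then show ?thesis by (simp add: vec_eq_iff)
qed

lemma Kset_column_None:
  assumes "k \<in> Kset"
  shows "k $ i $ None = (if i = None then 1 else 0)"
proof -
  have "(k *v axis None 1) $ i = axis None 1 $ i"
    using assms by (simp add: Kset_def)
  then show ?thesis
    by (simp add: matrix_vector_mult_def axis_def)
qed

lemma boost_invariant_eq_0:
  fixes x y :: real
  assumes "\<And>t. x = cosh t * x + sinh t * y"
  shows "x = 0 \<and> y = 0"
proof -
  have "x = cosh 1 * x + sinh 1 * y" "x = cosh 1 * x - sinh 1 * y"
    using assms[of 1] assms[of "-1"] by simp_all
  then have "cosh 1 * x = x" and y: "sinh 1 * y = 0"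
    by linarith+
  then have "(cosh 1 - 1) * x = 0"
    by (simp add: algebra_simps)
  moreover have "cosh (1::real) \<noteq> 1"
    by simp
  ultimately show ?thesis
    using y by simp
qed

lemma Mset_entries:
  assumes m: "m \<in> Mset"
  shows "m $ None $ j = (if j = None then 1 else 0)"
    and "m $ Some None $ j = (if j = Some None then 1 else 0)"
    and "m $ i $ Some None = (if i = Some None then 1 else 0)"
    and "m $ i $ None = (if i = None then 1 else 0)"
proof -
  show col: "\<And>i. m $ i $ None = (if i = None then 1 else 0)"
    using m by (simp add: Mset_def Kset_column_None)
  have comm: "\<And>t i j. (m ** aa t) $ i $ j = (aa t ** m) $ i $ j"
    using m by (simp add: Mset_def)
  have row: "m $ None $ Some (Some b) = 0 \<and> m $ Some None $ Some (Some b) = 0" for b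
    using comm[of _ None "Some (Some b)"]
    by (intro boost_invariant_eq_0) (simp add: matrix_mult_entry sum_option_option col)
  have m01: "m $ None $ Some None = 0"
    using comm[of 1 "Some None" "Some None"] by (simp add: matrix_mult_entry sum_option_option col row)
  have m11: "m $ Some None $ Some None = 1"
    using comm[of 1 "Some None" None] by (simp add: matrix_mult_entry sum_option_option col row)
  have ma1: "m $ Some (Some a) $ Some None = 0" for a
  proof -
    have "m $ Some (Some a) $ Some None * (cosh 1 - 1) = 0"
      using comm[of 1 "Some (Some a)" "Some None"]
      by (simp add: matrix_mult_entry sum_option_option col row algebra_simps)
    then show ?thesis by simp
  qed
  show "m $ None $ j = (if j = None then 1 else 0)"
    by (cases j rule: option_option_cases) (simp_all add: col m01 row)
  show "m $ Some None $ j = (if j = Some None then 1 else 0)"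
    by (cases j rule: option_option_cases) (simp_all add: col m11 row)
  show "m $ i $ Some None = (if i = Some None then 1 else 0)"
    by (cases i rule: option_option_cases) (simp_all add: m01 m11 ma1)
qed

definition Mblock :: "('m::finite) lmat \<Rightarrow> real^'m^'m" where
  "Mblock m = (\<chi> a b. m $ Some (Some a) $ Some (Some b))"

lemma Mblock_orthogonal:
  assumes m: "m \<in> Mset"
  shows "transpose (Mblock m) ** Mblock m = mat 1"
proof -
  have G: "transpose m ** Jform ** m = Jform"
    using m by (simp add: Mset_def Kset_def Gset_def)
  have "(transpose (Mblock m) ** Mblock m) $ a $ b = mat 1 $ a $ b" for a b
  proof -
    have "(transpose m ** Jform ** m) $ Some (Some a) $ Some (Some b) =
        Jform $ Some (Some a) $ Some (Some b)"
      using G by simp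
    then show ?thesis
      by (simp add: matrix_mult_entry sum_option_option Mset_entries[OF m] Mblock_def mat_def
          if_distrib cong: if_cong)
  qed
  then show ?thesis by (simp add: vec_eq_iff)
qed

lemma Mset_mult_uu:
  assumes m: "m \<in> Mset"
  shows "m ** uu z = uu (Mblock m *v z) ** m"
proof -
  define R where "R = Mblock m"
  define z' where "z' = R *v z"
  have orth: "transpose R ** R = mat 1"
    using Mblock_orthogonal[OF m] by (simp add: R_def)
  have norm_eq: "z' \<bullet> z' = z \<bullet> z"
  proof -
    have "z' \<bullet> z' = (z v* transpose R) \<bullet> (R *v z)"
      by (simp add: z'_def)
    also have "\<dots> = z \<bullet> (transpose R *v (R *v z))"
      by (rule dot_lmul_matrix)
    also have "\<dots> = z \<bullet> z"
      by (simp add: matrix_vector_mul_assoc orth)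
    finally show ?thesis .
  qed
  have inverse_eq: "(\<Sum>c\<in>UNIV. z' $ c * R $ c $ b) = z $ b" for b
  proof -
    have "z' v* R = (z v* transpose R) v* R"
      by (simp add: z'_def)
    also have "\<dots> = z"
      by (simp only: vector_matrix_mul_assoc orth vector_matrix_mul_rid)
    finally show ?thesis
      by (simp add: vector_matrix_mult_def vec_eq_iff mult.commute)
  qed
  have image_eq: "(\<Sum>c\<in>UNIV. R $ a $ c * z $ c) = z' $ a" for a
    by (simp add: z'_def matrix_vector_mult_def)
  have block: "m $ Some (Some a) $ Some (Some b) = R $ a $ b" for a b
    by (simp add: R_def Mblock_def)
  have "(m ** uu z) $ i $ j = (uu z' ** m) $ i $ j" for i j
    by (cases i rule: option_option_cases; cases j rule: option_option_cases)
       (simp_all add: matrix_mult_entry sum_option_option Mset_entries[OF m] block norm_eq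
         inverse_eq image_eq sum_negf)
  then show ?thesis by (simp add: vec_eq_iff z'_def R_def)
qed

lemma Mset_aa_commute: "m \<in> Mset \<Longrightarrow> m ** aa t = aa t ** m"
  by (simp add: Mset_def)

lemma MAN_mult_aa:
  assumes m: "m \<in> Mset"
  shows "m ** aa r ** uu y ** aa s = uu (Mblock m *v (exp r *\<^sub>R y)) ** aa (r + s) ** m"
proof -
  have "m ** aa r ** uu y ** aa s = (m ** uu (exp r *\<^sub>R y)) ** (aa r ** aa s)"
    using aa_mult_uu[of r y] by (metis matrix_mul_assoc)
  also have "\<dots> = uu (Mblock m *v (exp r *\<^sub>R y)) ** (m ** aa (r + s))"
    by (simp add: Mset_mult_uu[OF m] aa_add matrix_mul_assoc)
  finally show ?thesis
    by (simp add: Mset_aa_commute[OF m] matrix_mul_assoc)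
qed

section \<open>The isotropic covector and the character of \<open>P\<close>\<close>

definition nullrow :: "real^('m::finite) option option" where
  "nullrow = (\<chi> i. if i = None then 1 else if i = Some None then -1 else 0)"

lemma nullrow_mult_entry: "(nullrow v* X) $ j = X $ None $ j - X $ Some None $ j"
  by (simp add: nullrow_def vector_matrix_mult_def sum_option_option)

lemma nullrow_mult_uu: "nullrow v* uu y = nullrow"
proof -
  have "(nullrow v* uu y) $ j = nullrow $ j" for j
    unfolding nullrow_mult_entry
    by (cases j rule: option_option_cases) (simp_all add: nullrow_def)
  then show ?thesis by (simp add: vec_eq_iff)
qed

lemma nullrow_mult_aa: "nullrow v* aa t = exp (- t) *\<^sub>R (nullrow :: real^('m::finite) option option)"
proof -
  have "(nullrow v* aa t) $ j = exp (- t) * (nullrow :: real^'m option option) $ j" for j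
    unfolding nullrow_mult_entry
    by (cases j rule: option_option_cases) (simp_all add: nullrow_def cosh_minus_sinh sinh_minus_cosh)
  then show ?thesis by (simp add: vec_eq_iff)
qed

lemma nullrow_mult_Mset: "m \<in> Mset \<Longrightarrow> nullrow v* m = nullrow"
  by (simp add: vec_eq_iff nullrow_mult_entry Mset_entries) (simp add: nullrow_def)

lemma nullrow_mult_Nset: "l \<in> Nset \<Longrightarrow> nullrow v* l = nullrow"
  by (auto simp: Nset_def nullrow_mult_uu)

lemma nullrow_mult_Nset_left: "l \<in> Nset \<Longrightarrow> nullrow v* (l ** X) = nullrow v* X"
  by (simp add: nullrow_mult_Nset flip: vector_matrix_mul_assoc)

definition Pchar :: "('m::finite) lmat \<Rightarrow> real" where
  "Pchar g = (nullrow v* g) $ None"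

lemma Pchar_eigenvalue: "nullrow v* g = c *\<^sub>R nullrow \<Longrightarrow> Pchar g = c"
  by (simp add: Pchar_def nullrow_def)

lemma Pchar_Kset: "k \<in> Kset \<Longrightarrow> Pchar k = 1"
  by (simp add: Pchar_def nullrow_mult_entry Kset_column_None)

lemma nullrow_mult_MAN:
  "m \<in> Mset \<Longrightarrow> nullrow v* (m ** aa r ** uu y) = exp (- r) *\<^sub>R nullrow"
  by (simp add: nullrow_mult_Mset nullrow_mult_aa nullrow_mult_uu scaleR_vector_matrix_assoc
      flip: vector_matrix_mul_assoc)

lemma nullrow_mult_Pset: "p \<in> Pset \<Longrightarrow> nullrow v* p = Pchar p *\<^sub>R nullrow"
  by (auto simp: Pset_def Nset_def nullrow_mult_MAN Pchar_eigenvalue)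

lemma Pchar_MAN: "m \<in> Mset \<Longrightarrow> Pchar (m ** aa r ** uu y) = exp (- r)"
  by (simp add: nullrow_mult_MAN Pchar_eigenvalue)

lemma Pchar_Pset_pos: "p \<in> Pset \<Longrightarrow> Pchar p > 0"
  by (auto simp: Pset_def Nset_def Pchar_MAN)

section \<open>Boundedness of the character on \<open>\<Gamma>\<close>-translates\<close>

lemma exists_lattice_translate_in_Omega:
  assumes L: "is_subgroup L Nset" "L \<subseteq> Gset" and fund: "Nset = setmul L C"
    and p: "p \<in> Pset"
  shows "\<exists>l\<in>L. \<forall>s \<ge> s0 + ln (Pchar p). l ** p ** aa s \<in> Omega C s0"
proof -
  obtain m r y where m: "m \<in> Mset" and p_eq: "p = m ** aa r ** uu y"
    using p by (auto simp: Pset_def Nset_def)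
  define z where "z = Mblock m *v (exp r *\<^sub>R y)"
  have "uu z \<in> setmul L C"
    by (simp add: Nset_def flip: fund)
  then obtain l0 c where l0: "l0 \<in> L" and c: "c \<in> C" and z_eq: "uu z = l0 ** c"
    by (auto simp: setmul_def)
  define l where "l = matrix_inv l0"
  have "l \<in> L"
    using L l0 by (simp add: is_subgroup_def l_def)
  moreover have lz: "l ** uu z = c"
    using L l0 by (auto simp: l_def z_eq matrix_mul_assoc matrix_inv_left Gset_invertible)
  moreover have "l ** p ** aa s \<in> Omega C s0" if s: "s \<ge> s0 + ln (Pchar p)" for s
  proof -
    have "l ** p ** aa s = l ** (m ** aa r ** uu y ** aa s)"
      by (simp add: p_eq matrix_mul_assoc)
    also have "\<dots> = (l ** uu z) ** aa (r + s) ** m"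
      by (simp add: MAN_mult_aa[OF m] z_def matrix_mul_assoc)
    finally have "l ** p ** aa s = c ** aa (r + s) ** m"
      by (simp only: lz)
    moreover have "r + s \<ge> s0"
      using s by (simp add: p_eq Pchar_MAN[OF m])
    ultimately show ?thesis
      using c m by (auto simp: Omega_def Mset_def)
  qed
  ultimately show ?thesis by blast
qed

lemma Pchar_ratio_in_overlap_set:
  assumes \<Gamma>: "is_subgroup \<Gamma> Gset" and \<xi>: "invertible \<xi>"
    and L: "is_subgroup (\<Gamma> \<inter> Nset) Nset" and fund: "Nset = setmul (\<Gamma> \<inter> Nset) C"
    and \<gamma>1: "\<gamma>1 \<in> \<Gamma>" "\<gamma>1 ** \<xi> \<in> Pset" and \<gamma>: "\<gamma> \<in> \<Gamma>" "\<gamma> ** \<xi> \<in> Pset"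
  shows "\<exists>g \<in> {g \<in> \<Gamma>. setmul {g} (Omega C s0) \<inter> Omega C s0 \<noteq> {}}.
           Pchar (\<gamma> ** \<xi>) = Pchar (\<gamma>1 ** \<xi>) * Pchar g"
proof -
  have \<Gamma>_group: "\<Gamma> \<subseteq> Gset" "\<And>x y. x \<in> \<Gamma> \<Longrightarrow> y \<in> \<Gamma> \<Longrightarrow> x ** y \<in> \<Gamma>"
      "\<And>x. x \<in> \<Gamma> \<Longrightarrow> matrix_inv x \<in> \<Gamma>"
    using \<Gamma> by (auto simp: is_subgroup_def)
  then have L_Gset: "\<Gamma> \<inter> Nset \<subseteq> Gset"
    by blast
  define s where "s = s0 + max (ln (Pchar (\<gamma>1 ** \<xi>))) (ln (Pchar (\<gamma> ** \<xi>)))"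
  obtain l1 where l1: "l1 \<in> \<Gamma> \<inter> Nset" "l1 ** (\<gamma>1 ** \<xi>) ** aa s \<in> Omega C s0"
    using exists_lattice_translate_in_Omega[OF L L_Gset fund \<gamma>1(2), of s0] by (auto simp: s_def)
  obtain l2 where l2: "l2 \<in> \<Gamma> \<inter> Nset" "l2 ** (\<gamma> ** \<xi>) ** aa s \<in> Omega C s0"
    using exists_lattice_translate_in_Omega[OF L L_Gset fund \<gamma>(2), of s0] by (auto simp: s_def)
  define g where "g = l2 ** \<gamma> ** matrix_inv \<gamma>1 ** matrix_inv l1"
  have inv: "invertible \<gamma>1" "invertible l1"
    using \<gamma>1 l1 \<Gamma>_group(1) Gset_invertible by auto
  have g_eq: "g ** (l1 ** (\<gamma>1 ** \<xi>)) = l2 ** (\<gamma> ** \<xi>)"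
    by (simp add: g_def matrix_inv_cancel inv) (simp add: matrix_mul_assoc)
  have "g \<in> \<Gamma>"
    using \<Gamma>_group l1 l2 \<gamma> \<gamma>1 by (simp add: g_def)
  moreover have "g ** (l1 ** (\<gamma>1 ** \<xi>) ** aa s) = l2 ** (\<gamma> ** \<xi>) ** aa s"
    by (metis g_eq matrix_mul_assoc)
  then have "setmul {g} (Omega C s0) \<inter> Omega C s0 \<noteq> {}"
    using l1 l2 by (auto simp: setmul_def)
  moreover have "nullrow v* g = (Pchar (\<gamma> ** \<xi>) / Pchar (\<gamma>1 ** \<xi>)) *\<^sub>R nullrow"
  proof (rule left_eigenvector_of_mult_eq[OF _ g_eq])
    show "invertible (l1 ** (\<gamma>1 ** \<xi>))"
      using inv \<xi> by (simp add: invertible_mult)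
    show "Pchar (\<gamma>1 ** \<xi>) \<noteq> 0"
      using Pchar_Pset_pos[OF \<gamma>1(2)] by simp
  qed (use l1 l2 \<gamma> \<gamma>1 in \<open>simp_all add: nullrow_mult_Nset_left nullrow_mult_Pset\<close>)
  then have "Pchar g = Pchar (\<gamma> ** \<xi>) / Pchar (\<gamma>1 ** \<xi>)"
    by (rule Pchar_eigenvalue)
  then have "Pchar (\<gamma> ** \<xi>) = Pchar (\<gamma>1 ** \<xi>) * Pchar g"
    using Pchar_Pset_pos[OF \<gamma>1(2)] by simp
  ultimately show ?thesis
    by blast
qed

lemma Pchar_bounded_on_Gamma_orbit:
  assumes \<Gamma>: "is_subgroup \<Gamma> Gset" and \<xi>: "invertible \<xi>"
    and L: "is_subgroup (\<Gamma> \<inter> Nset) Nset" and fund: "Nset = setmul (\<Gamma> \<inter> Nset) C"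
    and fin: "finite {\<gamma> \<in> \<Gamma>. setmul {\<gamma>} (Omega C s0) \<inter> Omega C s0 \<noteq> {}}"
  shows "bdd_above (Pchar ` (Pset \<inter> (\<lambda>\<gamma>. \<gamma> ** \<xi>) ` \<Gamma>))"
proof (cases "Pset \<inter> (\<lambda>\<gamma>. \<gamma> ** \<xi>) ` \<Gamma> = {}")
  case False
  then obtain \<gamma>1 where \<gamma>1: "\<gamma>1 \<in> \<Gamma>" "\<gamma>1 ** \<xi> \<in> Pset"
    by blast
  define F where "F = {\<gamma> \<in> \<Gamma>. setmul {\<gamma>} (Omega C s0) \<inter> Omega C s0 \<noteq> {}}"
  have "Pchar ` (Pset \<inter> (\<lambda>\<gamma>. \<gamma> ** \<xi>) ` \<Gamma>) \<subseteq> (\<lambda>g. Pchar (\<gamma>1 ** \<xi>) * Pchar g) ` F"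
  proof
    fix q
    assume "q \<in> Pchar ` (Pset \<inter> (\<lambda>\<gamma>. \<gamma> ** \<xi>) ` \<Gamma>)"
    then obtain \<gamma> where "\<gamma> \<in> \<Gamma>" "\<gamma> ** \<xi> \<in> Pset" "q = Pchar (\<gamma> ** \<xi>)"
      by blast
    then show "q \<in> (\<lambda>g. Pchar (\<gamma>1 ** \<xi>) * Pchar g) ` F"
      using Pchar_ratio_in_overlap_set[OF \<Gamma> \<xi> L fund \<gamma>1] unfolding F_def by blast
  qed
  moreover have "finite F"
    using fin by (simp add: F_def)
  ultimately show ?thesis
    by (meson bdd_above_finite bdd_above_mono finite_imageI)
qed simp

lemma Pchar_eq_exp_of_decomposition:
  assumes \<sigma>: "\<sigma> \<in> Kset" "\<sigma> ** aa t = aa (- t) ** \<sigma>"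
    and p: "p \<in> Pset" and v: "v \<in> Nset" and k: "k \<in> Kset"
    and eq: "uu x ** \<sigma> ** aa t = p ** v ** aa s ** k"
  shows "Pchar p = exp (t + s)"
proof -
  have "nullrow v* (uu x ** \<sigma> ** aa t) = exp t *\<^sub>R (nullrow v* \<sigma>)"
    by (simp add: \<sigma>(2) nullrow_mult_uu nullrow_mult_aa scaleR_vector_matrix_assoc
        flip: matrix_mul_assoc vector_matrix_mul_assoc)
  then have "Pchar (uu x ** \<sigma> ** aa t) = exp t"
    using Pchar_Kset[OF \<sigma>(1)] by (simp add: Pchar_def)
  moreover have "nullrow v* (p ** v ** aa s ** k) = (Pchar p * exp (- s)) *\<^sub>R (nullrow v* k)"
    by (simp add: nullrow_mult_Pset[OF p] nullrow_mult_Nset[OF v] nullrow_mult_aa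
        scaleR_vector_matrix_assoc flip: vector_matrix_mul_assoc)
  then have "Pchar (p ** v ** aa s ** k) = Pchar p * exp (- s)"
    using Pchar_Kset[OF k] by (simp add: Pchar_def)
  ultimately have "exp t = Pchar p * exp (- s)"
    by (simp add: eq)
  then show ?thesis
    by (simp add: exp_add exp_minus field_simps)
qed

lemma Pchar_bounded_on_Gamma_Xi:
  assumes \<Gamma>: "is_subgroup \<Gamma> Gset" and \<Xi>: "finite \<Xi>" "\<Xi> \<subseteq> Gset" "mat 1 \<in> \<Xi>"
    and lattice: "cocompact_lattice (\<Gamma> \<inter> Nset) Nset"
    and finite_overlaps: "\<forall>\<eta>. compact \<eta> \<and> \<eta> \<subseteq> Nset \<longrightarrow>
       finite {\<gamma> \<in> \<Gamma>. setmul {\<gamma>} (setmul \<Xi> (Omega \<eta> s0)) \<inter> Omega \<eta> s0 \<noteq> {}}"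
  shows "\<exists>B. \<forall>\<gamma>\<in>\<Gamma>. \<forall>\<xi>\<in>\<Xi>. \<gamma> ** \<xi> \<in> Pset \<longrightarrow> Pchar (\<gamma> ** \<xi>) \<le> B"
proof -
  obtain C where C: "compact C" "C \<subseteq> Nset" and L: "is_subgroup (\<Gamma> \<inter> Nset) Nset"
    and fund: "Nset = setmul (\<Gamma> \<inter> Nset) C"
    using lattice by (auto simp: cocompact_lattice_def)
  have "setmul {\<gamma>} (Omega C s0) \<subseteq> setmul {\<gamma>} (setmul \<Xi> (Omega C s0))" for \<gamma>
    using \<Xi>(3) by (force simp: setmul_def)
  then have fin: "finite {\<gamma> \<in> \<Gamma>. setmul {\<gamma>} (Omega C s0) \<inter> Omega C s0 \<noteq> {}}"
    using finite_overlaps C by (blast intro: rev_finite_subset)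
  have "bdd_above (Pchar ` (Pset \<inter> (\<lambda>\<gamma>. \<gamma> ** \<xi>) ` \<Gamma>))" if "\<xi> \<in> \<Xi>" for \<xi>
    using that \<Xi>(2) by (intro Pchar_bounded_on_Gamma_orbit[OF \<Gamma> Gset_invertible L fund fin]) blast
  then have "bdd_above (\<Union>\<xi>\<in>\<Xi>. Pchar ` (Pset \<inter> (\<lambda>\<gamma>. \<gamma> ** \<xi>) ` \<Gamma>))"
    using \<Xi>(1) by simp
  then show ?thesis
    by (auto simp: bdd_above_def)
qed

theorem proposition3p1:
  fixes \<Gamma> :: "('m::finite) lmat set" and \<Xi> :: "'m lmat set" and \<eta>0 :: "'m lmat set"
    and s0 :: real and \<sigma> :: "'m lmat"
  assumes sigK: "\<sigma> \<in> Kset" and sig2: "\<sigma> ** \<sigma> = mat 1"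
    and sigA: "\<forall>t. \<sigma> ** aa t ** matrix_inv \<sigma> = aa (- t)"
    and Gam_sub: "is_subgroup \<Gamma> Gset" and Gam_disc: "discrete_set \<Gamma>"
    and s0_pos: "s0 > 0"
    and eta0: "compact \<eta>0" "\<eta>0 \<subseteq> Nset"
    and Xi: "finite \<Xi>" "\<Xi> \<subseteq> Gset" "mat 1 \<in> \<Xi>"
    and i: "Gset = setmul \<Gamma> (setmul \<Xi> (Omega \<eta>0 s0))"
    and ii: "\<forall>\<xi>\<in>\<Xi>. cocompact_lattice (\<Gamma> \<inter> conjset \<xi> Nset) (conjset \<xi> Nset)"
    and iii: "\<forall>\<eta>. compact \<eta> \<and> \<eta> \<subseteq> Nset \<longrightarrow>
       finite {\<gamma> \<in> \<Gamma>. setmul {\<gamma>} (setmul \<Xi> (Omega \<eta> s0)) \<inter> Omega \<eta> s0 \<noteq> {}}"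
    and iv: "\<forall>\<eta>. compact \<eta> \<and> \<eta>0 \<subseteq> \<eta> \<and> \<eta> \<subseteq> Nset \<longrightarrow>
       (\<exists>s1>s0. \<forall>\<gamma>\<in>\<Gamma>. \<forall>\<xi>1\<in>\<Xi>. \<forall>\<xi>2\<in>\<Xi>.
          setmul {\<gamma> ** \<xi>1} (Omega \<eta> s0) \<inter> setmul {\<xi>2} (Omega \<eta> s1) \<noteq> {} \<longrightarrow>
          \<xi>1 = \<xi>2 \<and> \<gamma> \<in> conjset \<xi>1 (setmul Nset Mset))"
  shows "\<exists>t0>0. \<forall>x :: real^'m. \<forall>t. t > t0 \<longrightarrow>
     (\<forall>\<gamma> \<xi> v s k. \<gamma> \<in> \<Gamma> \<and> \<xi> \<in> \<Xi> \<and> v \<in> Nset \<and> s > s0 \<and> k \<in> Kset \<and>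
        uu x ** \<sigma> ** aa t = \<gamma> ** \<xi> ** v ** aa s ** k \<longrightarrow> \<gamma> ** \<xi> \<notin> Pset)"
proof -
  obtain B where B: "\<forall>\<gamma>\<in>\<Gamma>. \<forall>\<xi>\<in>\<Xi>. \<gamma> ** \<xi> \<in> Pset \<longrightarrow> Pchar (\<gamma> ** \<xi>) \<le> B"
    using Pchar_bounded_on_Gamma_Xi[OF Gam_sub Xi _ iii] ii Xi(3) by (metis conjset_mat_1)
  have \<sigma>_aa: "\<sigma> ** aa t = aa (- t) ** \<sigma>" for t
    using sigA matrix_inv_cancel[of \<sigma> "\<sigma> ** aa t" "mat 1"] sig2
    by (metis invertible_def matrix_mul_rid)
  show ?thesis
  proof (intro exI[of _ "max 1 B"] conjI allI impI notI)
    fix x :: "real^'m" and t \<gamma> \<xi> v s k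
    assume t: "max 1 B < t"
      and decomp: "\<gamma> \<in> \<Gamma> \<and> \<xi> \<in> \<Xi> \<and> v \<in> Nset \<and> s > s0 \<and> k \<in> Kset \<and>
        uu x ** \<sigma> ** aa t = \<gamma> ** \<xi> ** v ** aa s ** k"
      and P: "\<gamma> ** \<xi> \<in> Pset"
    have "Pchar (\<gamma> ** \<xi>) = exp (t + s)"
      using decomp by (intro Pchar_eq_exp_of_decomposition[OF sigK \<sigma>_aa P]) auto
    moreover have "Pchar (\<gamma> ** \<xi>) \<le> B"
      using B P decomp by blast
    ultimately have "exp (t + s) \<le> B"
      by simp
    moreover have "t < exp t"
      by (rule exp_gt_self)
    moreover have "exp t \<le> exp (t + s)"
      using decomp s0_pos by simp
    ultimately show False
      using t by linarith
  qed simp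
qed

end
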